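(* Let $f,h,a,b$ be as follows: $f:\mathbb R\times\mathbb C^n\to\mathbb R$ smooth with $f(x,z)=|z|^2+O(|x||z|+|z|^3)$ near $0$; $h:\mathbb C^n\to\mathbb R$ smooth with $h(\zeta)=O(|\zeta|^3)$; $a,b:[0,\infty)\times\mathbb C^n\to\mathbb C^n$ smooth; $v\cdot w$ the real Euclidean inner product on $\mathbb C^n\cong\mathbb R^{2n}$. For $\tau>0$ and a ball $B=\{|\zeta|<r_0\}$ set $$J(s)=\int_B\frac{d\zeta}{\big[(f(h(\zeta),\zeta)+s(1+\zeta\cdot b(s,\zeta)))-i(h(\zeta)+s\,\zeta\cdot a(s,\zeta))\big]^\tau},$$ using the principal branch of $w\mapsto w^\tau$. Then, for $r_0$ small enough, the bracket has positive real part for $(s,\zeta)\ne(0,0)$, and there exist $C'>0$ and $s_0>0$ such that for $0<s<s_0$ $$\mathrm{Re}\,J(s)\ \ge\ C'\int_0^{r_0}\frac{r^{2n-1}}{(s+r^2)^\tau}\,dr .$$ In particular, if $\tau\ge n$ then $\mathrm{Re}\,J(s)\to+\infty$ as $s\to0^+$. *)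

theory Defs
  imports "HOL-Analysis.Analysis" "HOL-Library.Landau_Symbols"
begin

definition dir_deriv :: "'a::real_normed_vector set \<Rightarrow> 'a \<Rightarrow> ('a \<Rightarrow> 'b::real_normed_vector) \<Rightarrow> 'a \<Rightarrow> 'b"
  where "dir_deriv S v g = (\<lambda>y. frechet_derivative g (at y within S) v)"

text \<open>C-infinity on S: every iterated directional derivative exists (Frechet differentiable
  within S) at every point of S.  This implies all Frechet derivatives of all orders exist
  and are continuous.\<close>
definition smooth_on :: "'a::real_normed_vector set \<Rightarrow> ('a \<Rightarrow> 'b::real_normed_vector) \<Rightarrow> bool"
  where "smooth_on S f \<longleftrightarrow>
     (\<forall>vs::'a list. \<forall>x\<in>S. fold (dir_deriv S) vs f differentiable (at x within S))"

end

theory Submission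
  imports Defs
begin

(* Near the origin the bracket is (s + |\<zeta>|^2)(1 + O(|\<zeta>|)): the error terms of f and h and the
   terms s \<zeta>.a, s \<zeta>.b are all O(|\<zeta>| (s + |\<zeta>|^2)). So for small r0 the bracket has small
   argument and modulus comparable to s + |\<zeta>|^2, and the real part of its (-\<tau>)-th power is at
   least a constant times (s + |\<zeta>|^2)^-\<tau>. Integrating this radially, with dyadic annuli in
   place of polar coordinates, gives the lower bound; for \<tau> >= n the radial integral is at least
   a constant times log (r0 / sqrt s), which diverges as s -> 0+. *)

section \<open>Radial integrals\<close>

lemma continuous_on_compact_integrable_on:
  fixes f :: "'a::euclidean_space \<Rightarrow> 'b::euclidean_space"
  assumes "compact K" "continuous_on K f" "S \<subseteq> K" "S \<in> sets lborel"
  shows "f integrable_on S"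
proof -
  have "set_integrable lborel K f"
    using borel_integrable_compact[OF assms(1,2)] by (simp add: set_integrable_def)
  then have "set_integrable lborel S f"
    using set_integrable_subset assms(3,4) by blast
  then show ?thesis
    by (rule set_borel_integral_eq_integral(1))
qed

lemma integral_ge_const_mult_measure:
  fixes f :: "'a::euclidean_space \<Rightarrow> real"
  assumes "f integrable_on S" "S \<in> sets lborel" "bounded S" "\<And>x. x \<in> S \<Longrightarrow> c \<le> f x"
  shows "c * measure lborel S \<le> integral S f"
proof -
  have S: "S \<in> lmeasurable"
    using assms(2,3) by (simp add: bounded_set_imp_lmeasurable sets_completionI_sets)
  have "c * measure lborel S = integral S (\<lambda>_. c)"
    using lmeasure_integral[OF S] assms(2) integral_mult_right[of S c "\<lambda>_. 1"] by simp
  also have "\<dots> \<le> integral S f"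
    using integral_le[OF integrable_on_const[OF S] assms(1)] assms(4) by blast
  finally show ?thesis .
qed

context
  fixes \<phi> :: "real \<Rightarrow> real"
  assumes cont: "continuous_on UNIV \<phi>"
    and antimono: "\<And>x y. 0 \<le> x \<Longrightarrow> x \<le> y \<Longrightarrow> \<phi> y \<le> \<phi> x"
    and nonneg: "\<And>x. 0 \<le> \<phi> x"
begin

lemma integrable_on_radial:
  assumes "S \<subseteq> ball (0::'a::euclidean_space) r" "S \<in> sets lborel"
  shows "(\<lambda>\<zeta>. \<phi> (norm \<zeta>)) integrable_on S"
  by (rule continuous_on_compact_integrable_on[of "cball 0 r"])
     (use assms cont in \<open>auto intro!: continuous_on_compose2[OF cont] continuous_intros\<close>)

lemma integral_ball_radial_ge:
  assumes "0 \<le> r"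
  shows "unit_ball_vol DIM('a) * r ^ DIM('a) * \<phi> r
           \<le> integral (ball (0::'a::euclidean_space) r) (\<lambda>\<zeta>. \<phi> (norm \<zeta>))"
proof -
  have "\<phi> r * measure lborel (ball (0::'a) r) \<le> integral (ball (0::'a) r) (\<lambda>\<zeta>. \<phi> (norm \<zeta>))"
    by (rule integral_ge_const_mult_measure) (auto intro: integrable_on_radial antimono)
  then show ?thesis
    using content_ball[OF assms, where 'a='a] by (simp add: mult_ac)
qed

lemma integral_annulus_radial_ge:
  assumes "0 \<le> r"
  shows "unit_ball_vol DIM('a) * r ^ DIM('a) * \<phi> r / 2
           \<le> integral (ball (0::'a::euclidean_space) r - ball 0 (r/2)) (\<lambda>\<zeta>. \<phi> (norm \<zeta>))"
proof -
  define \<omega> where "\<omega> = unit_ball_vol DIM('a)"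
  have "(r/2) ^ DIM('a) \<le> r ^ DIM('a) / 2"
  proof -
    have "(2::real) \<le> 2 ^ DIM('a)"
      using DIM_positive[where 'a='a] by (metis One_nat_def Suc_leI power_increasing power_one_right one_le_numeral)
    then have "r ^ DIM('a) / 2 ^ DIM('a) \<le> r ^ DIM('a) / 2"
      using assms by (intro divide_left_mono) auto
    then show ?thesis
      by (simp add: power_divide)
  qed
  then have "\<omega> * r ^ DIM('a) / 2 \<le> \<omega> * r ^ DIM('a) - \<omega> * (r/2) ^ DIM('a)"
    unfolding \<omega>_def by (simp add: right_diff_distrib[symmetric] mult_left_mono)
  also have "\<dots> = measure lborel (ball (0::'a) r) - measure lborel (ball (0::'a) (r/2))"
    using assms by (simp add: \<omega>_def content_ball)
  also have "\<dots> = measure lborel (ball (0::'a) r - ball 0 (r/2))"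
    using assms emeasure_lborel_ball_finite[of "0::'a" r] by (intro measure_Diff[symmetric]) auto
  finally have "\<phi> r * (\<omega> * r ^ DIM('a) / 2) \<le> \<phi> r * measure lborel (ball (0::'a) r - ball 0 (r/2))"
    using nonneg by (rule mult_left_mono)
  also have "\<dots> \<le> integral (ball (0::'a) r - ball 0 (r/2)) (\<lambda>\<zeta>. \<phi> (norm \<zeta>))"
    by (rule integral_ge_const_mult_measure) (auto intro: integrable_on_radial antimono)
  finally show ?thesis
    by (simp add: \<omega>_def mult_ac)
qed

lemma integral_radial_weight_le:
  assumes "0 \<le> a" "a \<le> b"
  shows "integral {a..b} (\<lambda>t. t ^ k * \<phi> t) \<le> (b - a) * (b ^ k * \<phi> a)"
proof -
  have "integral {a..b} (\<lambda>t. t ^ k * \<phi> t) \<le> integral {a..b} (\<lambda>_. b ^ k * \<phi> a)"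
  proof (rule integral_le)
    show "(\<lambda>t. t ^ k * \<phi> t) integrable_on {a..b}"
      by (rule integrable_continuous_interval)
         (auto intro!: continuous_intros continuous_on_subset[OF cont])
    show "t ^ k * \<phi> t \<le> b ^ k * \<phi> a" if "t \<in> {a..b}" for t
      using that assms by (intro mult_mono power_mono antimono nonneg) auto
  qed auto
  then show ?thesis
    using assms by (simp add: mult_ac)
qed

lemma radial_integral_le_ball_integral_near_0:
  assumes "\<phi> 0 \<le> L * \<phi> r1" "0 < L" "0 < r" "r \<le> r1"
  shows "unit_ball_vol DIM('a) / L * integral {0..r} (\<lambda>t. t ^ (DIM('a) - 1) * \<phi> t)
           \<le> integral (ball (0::'a::euclidean_space) r) (\<lambda>\<zeta>. \<phi> (norm \<zeta>))"
proof -
  define m where "m = DIM('a)"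
  have "unit_ball_vol m / L * integral {0..r} (\<lambda>t. t ^ (m - 1) * \<phi> t)
          \<le> unit_ball_vol m / L * (r * (r ^ (m - 1) * \<phi> 0))"
    using integral_radial_weight_le[of 0 r "m - 1"] assms by (intro mult_left_mono) auto
  also have "\<dots> \<le> unit_ball_vol m / L * (r * (r ^ (m - 1) * (L * \<phi> r)))"
    using order_trans[OF assms(1) mult_left_mono[OF antimono[of r r1]]] assms
    by (intro mult_left_mono) auto
  also have "\<dots> = unit_ball_vol m * r ^ m * \<phi> r"
    using \<open>0 < L\<close> DIM_positive[where 'a='a] by (simp add: m_def power_eq_if[of r "DIM('a)"])
  also have "\<dots> \<le> integral (ball (0::'a) r) (\<lambda>\<zeta>. \<phi> (norm \<zeta>))"
    using integral_ball_radial_ge[of r] assms by (simp add: m_def)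
  finally show ?thesis
    by (simp add: m_def)
qed

lemma radial_integral_le_annulus_integral:
  assumes "\<phi> (r/2) \<le> L * \<phi> r" "0 < L" "0 < r"
  shows "unit_ball_vol DIM('a) / L * integral {r/2..r} (\<lambda>t. t ^ (DIM('a) - 1) * \<phi> t)
           \<le> integral (ball (0::'a::euclidean_space) r - ball 0 (r/2)) (\<lambda>\<zeta>. \<phi> (norm \<zeta>))"
proof -
  define m where "m = DIM('a)"
  have "unit_ball_vol m / L * integral {r/2..r} (\<lambda>t. t ^ (m - 1) * \<phi> t)
          \<le> unit_ball_vol m / L * (r/2 * (r ^ (m - 1) * \<phi> (r/2)))"
    using integral_radial_weight_le[of "r/2" r "m - 1"] assms by (intro mult_left_mono) auto
  also have "\<dots> \<le> unit_ball_vol m / L * (r/2 * (r ^ (m - 1) * (L * \<phi> r)))"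
    using assms by (intro mult_left_mono) auto
  also have "\<dots> = unit_ball_vol m * r ^ m * \<phi> r / 2"
    using \<open>0 < L\<close> DIM_positive[where 'a='a] by (simp add: m_def power_eq_if[of r "DIM('a)"])
  also have "\<dots> \<le> integral (ball (0::'a) r - ball 0 (r/2)) (\<lambda>\<zeta>. \<phi> (norm \<zeta>))"
    using integral_annulus_radial_ge[of r] assms by (simp add: m_def)
  finally show ?thesis
    by (simp add: m_def)
qed

(* The ball of radius 2^K r1 is the ball of radius r1 plus K dyadic annuli, and the two integrals
   are compared piece by piece. *)
lemma radial_integral_le_ball_integral:
  assumes doubling: "\<And>r. 0 < r \<Longrightarrow> \<phi> (r/2) \<le> L * \<phi> r"
    and "0 < r1" and base: "\<phi> 0 \<le> L * \<phi> r1"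
    and "0 < L" "0 < \<rho>"
  shows "unit_ball_vol DIM('a) / L * integral {0..\<rho>} (\<lambda>t. t ^ (DIM('a) - 1) * \<phi> t)
           \<le> integral (ball (0::'a::euclidean_space) \<rho>) (\<lambda>\<zeta>. \<phi> (norm \<zeta>))"
proof -
  define c where "c = unit_ball_vol DIM('a) / L"
  define g where "g = (\<lambda>t. t ^ (DIM('a) - 1) * \<phi> t)"
  have g_int: "g integrable_on {a..b}" for a b
    unfolding g_def by (rule integrable_continuous_interval)
       (auto intro!: continuous_intros continuous_on_subset[OF cont])
  have "c * integral {0..r} g \<le> integral (ball (0::'a) r) (\<lambda>\<zeta>. \<phi> (norm \<zeta>))"
    if "0 < r" "r \<le> 2 ^ K * r1" for K r
    using that
  proof (induction K arbitrary: r)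
    case 0
    then show ?case
      using radial_integral_le_ball_integral_near_0[where 'a='a, OF base \<open>0 < L\<close>] by (simp add: c_def g_def)
  next
    case (Suc K)
    have "integral {0..r} g = integral {0..r/2} g + integral {r/2..r} g"
      using Suc.prems by (intro Henstock_Kurzweil_Integration.integral_combine[symmetric] g_int) auto
    moreover have "integral (ball (0::'a) r) (\<lambda>\<zeta>. \<phi> (norm \<zeta>))
        = integral (ball 0 (r/2)) (\<lambda>\<zeta>::'a. \<phi> (norm \<zeta>))
          + integral (ball 0 r - ball 0 (r/2)) (\<lambda>\<zeta>::'a. \<phi> (norm \<zeta>))"
    proof -
      have "ball (0::'a) r = ball 0 (r/2) \<union> (ball 0 r - ball 0 (r/2))"
        using Suc.prems by auto
      moreover have "integral (ball 0 (r/2) \<union> (ball 0 r - ball 0 (r/2))) (\<lambda>\<zeta>::'a. \<phi> (norm \<zeta>))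
          = integral (ball 0 (r/2)) (\<lambda>\<zeta>::'a. \<phi> (norm \<zeta>))
            + integral (ball 0 r - ball 0 (r/2)) (\<lambda>\<zeta>::'a. \<phi> (norm \<zeta>))"
        using Suc.prems by (intro integral_Un integrable_on_radial[of _ r]) auto
      ultimately show ?thesis
        by simp
    qed
    moreover have "c * integral {r/2..r} g \<le> integral (ball (0::'a) r - ball 0 (r/2)) (\<lambda>\<zeta>. \<phi> (norm \<zeta>))"
      using radial_integral_le_annulus_integral[where 'a='a, OF doubling \<open>0 < L\<close>] Suc.prems by (simp add: c_def g_def)
    ultimately show ?case
      using Suc.IH[of "r/2"] Suc.prems by (simp add: distrib_left)
  qed
  moreover obtain K :: nat where "\<rho> / r1 < 2 ^ K"
    using real_arch_pow[of 2 "\<rho> / r1"] by auto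
  then have "\<rho> \<le> 2 ^ K * r1"
    using \<open>0 < r1\<close> by (simp add: field_simps)
  ultimately show ?thesis
    using \<open>0 < \<rho>\<close> by (simp add: c_def g_def)
qed

end

lemma has_integral_inverse_real:
  assumes "0 < a" "a \<le> b"
  shows "((\<lambda>t::real. c / t) has_integral c * (ln b - ln a)) {a..b}"
proof -
  have "((\<lambda>t. c / t) has_integral (c * ln b - c * ln a)) {a..b}"
  proof (rule fundamental_theorem_of_calculus)
    show "((\<lambda>t. c * ln t) has_vector_derivative c / t) (at t within {a..b})" if "t \<in> {a..b}" for t
      using that assms
      by (auto intro!: derivative_eq_intros simp: has_real_derivative_iff_has_vector_derivative[symmetric])
  qed fact
  then show ?thesis
    by (simp add: right_diff_distrib)
qed

lemma radial_weight_ge_inverse: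
  fixes s \<tau> r r0 :: real and m :: nat
  assumes "0 < s" "sqrt s \<le> r" "r \<le> r0" "1 \<le> m" "real m \<le> 2 * \<tau>"
  shows "2 powr (- \<tau>) * r0 powr (real m - 2 * \<tau>) / r \<le> r ^ (m - 1) / (s + r\<^sup>2) powr \<tau>"
proof -
  have "0 < r"
    using assms(1,2) by (meson less_le_trans real_sqrt_gt_zero)
  have "0 < \<tau>"
    using assms(4,5) by linarith
  have "s \<le> r\<^sup>2"
    using assms(1,2) real_sqrt_le_iff by fastforce
  then have "(s + r\<^sup>2) powr \<tau> \<le> (2 * r\<^sup>2) powr \<tau>"
    using assms(1) \<open>0 < \<tau>\<close> by (intro powr_mono2) auto
  also have "\<dots> = 2 powr \<tau> * (r powr 2) powr \<tau>"
    using \<open>0 < r\<close> by (simp add: powr_mult)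
  also have "\<dots> = 2 powr \<tau> * r powr (2 * \<tau>)"
    by (simp only: powr_powr)
  finally have denom: "(s + r\<^sup>2) powr \<tau> \<le> 2 powr \<tau> * r powr (2 * \<tau>)" .
  have "r0 powr (real m - 2 * \<tau>) \<le> r powr (real m - 2 * \<tau>)"
    using assms(3,5) \<open>0 < r\<close> by (intro powr_mono2') auto
  then have "2 powr (- \<tau>) * r0 powr (real m - 2 * \<tau>) / r \<le> 2 powr (- \<tau>) * r powr (real m - 2 * \<tau>) / r"
    using \<open>0 < r\<close> by (simp add: divide_right_mono)
  also have "\<dots> = r ^ m / (r * (2 powr \<tau> * r powr (2 * \<tau>)))"
    using \<open>0 < r\<close> by (simp add: powr_diff powr_minus_divide powr_realpow)
  also have "\<dots> = r ^ (m - 1) / (2 powr \<tau> * r powr (2 * \<tau>))"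
    using \<open>0 < r\<close> assms(4) by (simp add: power_eq_if[of r m])
  also have "\<dots> \<le> r ^ (m - 1) / (s + r\<^sup>2) powr \<tau>"
  proof (rule divide_left_mono[OF denom])
    have "0 < s + r\<^sup>2"
      using assms(1) by (simp add: add_pos_nonneg)
    then show "0 < 2 powr \<tau> * r powr (2 * \<tau>) * (s + r\<^sup>2) powr \<tau>"
      using \<open>0 < r\<close> by simp
  qed (use \<open>0 < r\<close> in simp)
  finally show ?thesis .
qed

lemma radial_weight_integral_tendsto_at_top:
  fixes \<tau> r0 :: real and m :: nat
  assumes "0 < r0" "1 \<le> m" "real m \<le> 2 * \<tau>"
  shows "filterlim (\<lambda>s. integral {0..r0} (\<lambda>r. r ^ (m - 1) / (s + r\<^sup>2) powr \<tau>)) at_top (at_right 0)"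
proof -
  define c where "c = 2 powr (- \<tau>) * r0 powr (real m - 2 * \<tau>)"
  have "0 < c"
    using assms(1) by (simp add: c_def)
  have "filterlim (\<lambda>s. c * (ln r0 - ln s / 2)) at_top (at_right 0)"
  proof (rule filterlim_tendsto_pos_mult_at_top[OF tendsto_const \<open>0 < c\<close>])
    have "filterlim (\<lambda>s. - ln s) at_top (at_right (0::real))"
      using filterlim_uminus_at_bot ln_at_0 by blast
    then have "filterlim (\<lambda>s. ln r0 + 1/2 * - ln s) at_top (at_right 0)"
      by (intro filterlim_tendsto_add_at_top[OF tendsto_const]
          filterlim_tendsto_pos_mult_at_top[OF tendsto_const]) auto
    then show "filterlim (\<lambda>s. ln r0 - ln s / 2) at_top (at_right 0)"
      by simp
  qed
  moreover have "\<forall>\<^sub>F s in at_right 0. c * (ln r0 - ln s / 2)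
                   \<le> integral {0..r0} (\<lambda>r. r ^ (m - 1) / (s + r\<^sup>2) powr \<tau>)"
  proof -
    have "\<forall>\<^sub>F s in at_right 0. 0 < s \<and> s < r0\<^sup>2"
      using assms(1) by (intro eventually_conj eventually_at_right_less)
        (auto simp: eventually_at_right_field intro: exI[of _ "r0\<^sup>2"])
    then show ?thesis
    proof eventually_elim
      case (elim s)
      define g where "g = (\<lambda>r. r ^ (m - 1) / (s + r\<^sup>2) powr \<tau>)"
      have "s + r\<^sup>2 \<noteq> 0" for r
        using elim add_pos_nonneg[of s "r\<^sup>2"] by simp
      then have g_int: "g integrable_on {a..b}" for a b
        unfolding g_def by (intro integrable_continuous_interval continuous_intros) auto
      have "0 < sqrt s" "sqrt s \<le> r0"
        using elim assms(1) by (auto simp: real_le_lsqrt less_imp_le)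
      have "c * (ln r0 - ln s / 2) = integral {sqrt s..r0} (\<lambda>r. c / r)"
        using has_integral_inverse_real[OF \<open>0 < sqrt s\<close> \<open>sqrt s \<le> r0\<close>, of c] elim
        by (simp add: integral_unique ln_sqrt)
      also have "\<dots> \<le> integral {sqrt s..r0} g"
      proof (rule integral_le[OF _ g_int])
        show "(\<lambda>r. c / r) integrable_on {sqrt s..r0}"
          using has_integral_inverse_real[OF \<open>0 < sqrt s\<close> \<open>sqrt s \<le> r0\<close>] by blast
        show "c / r \<le> g r" if "r \<in> {sqrt s..r0}" for r
          using that elim assms radial_weight_ge_inverse[of s r r0 m \<tau>] by (simp add: g_def c_def)
      qed
      also have "\<dots> \<le> integral {0..sqrt s} g + integral {sqrt s..r0} g"
        using integral_nonneg[OF g_int, of 0 "sqrt s"] by (simp add: g_def)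
      also have "\<dots> = integral {0..r0} g"
        using \<open>0 < sqrt s\<close> \<open>sqrt s \<le> r0\<close>
        by (intro Henstock_Kurzweil_Integration.integral_combine g_int) auto
      finally show ?case
        by (simp add: g_def)
    qed
  qed
  ultimately show ?thesis
    by (rule filterlim_at_top_mono)
qed

section \<open>Inverse powers near the positive real axis\<close>

lemma Re_pos_if_near_pos_real:
  fixes w :: complex and q \<eta> :: real
  assumes "0 < q" "cmod (w - of_real q) \<le> \<eta> * q" "\<eta> < 1"
  shows "0 < Re w"
proof -
  have "q - Re w \<le> \<eta> * q"
    using assms(2) abs_Re_le_cmod[of "w - of_real q"] by auto
  moreover have "\<eta> * q < q"
    using assms(1,3) by simp
  ultimately show ?thesis
    by linarith
qed

lemma abs_Arg_le_abs_Im_div_Re: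
  assumes "0 < Re w"
  shows "\<bar>Arg w\<bar> \<le> \<bar>Im w\<bar> / Re w"
  using arg_conv_arctan[OF assms] abs_arctan_le[of "Im w / Re w"] assms by (simp add: abs_div)

lemma Re_inverse_powr_real:
  assumes "w \<noteq> 0"
  shows "Re (1 / w powr of_real \<tau>) = cos (\<tau> * Arg w) / cmod w powr \<tau>"
proof -
  have "1 / w powr of_real \<tau> = exp (- (of_real \<tau> * Ln w))"
    using assms by (simp add: powr_def exp_minus field_simps)
  then have "Re (1 / w powr of_real \<tau>) = exp (- (\<tau> * ln (cmod w))) * cos (\<tau> * Arg w)"
    using assms by (simp add: Re_exp Arg_eq_Im_Ln)
  also have "\<dots> = cos (\<tau> * Arg w) / cmod w powr \<tau>"
    using assms by (simp add: powr_def exp_minus field_simps)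
  finally show ?thesis .
qed

lemma Re_inverse_powr_ge:
  fixes w :: complex and q \<tau> \<eta> :: real
  assumes "0 < q" "0 < \<tau>" and near: "cmod (w - of_real q) \<le> \<eta> * q"
    and "\<eta> \<le> 1/2" "\<eta> * \<tau> \<le> 1/4"
  shows "1 / (2 * (2 * q) powr \<tau>) \<le> Re (1 / w powr of_real \<tau>)"
proof -
  have "\<bar>Re w - q\<bar> \<le> \<eta> * q" "\<bar>Im w\<bar> \<le> \<eta> * q"
    using near abs_Re_le_cmod[of "w - of_real q"] abs_Im_le_cmod[of "w - of_real q"] by auto
  moreover have "\<eta> * q \<le> q / 2"
    using mult_right_mono[OF \<open>\<eta> \<le> 1/2\<close>, of q] \<open>0 < q\<close> by simp
  ultimately have Re_w: "q / 2 \<le> Re w" and Im_w: "\<bar>Im w\<bar> \<le> \<eta> * q"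
    by auto
  have "cmod w \<le> q + cmod (w - of_real q)"
    using norm_triangle_sub[of w "of_real q"] \<open>0 < q\<close> by simp
  then have "cmod w \<le> 2 * q"
    using near \<open>\<eta> * q \<le> q / 2\<close> \<open>0 < q\<close> by linarith
  then have "cmod w powr \<tau> \<le> (2 * q) powr \<tau>"
    using \<open>0 < \<tau>\<close> by (intro powr_mono2) auto
  have "0 < Re w" "w \<noteq> 0"
    using Re_w \<open>0 < q\<close> by auto
  have "\<bar>Im w\<bar> / Re w \<le> \<eta> * q / (q / 2)"
    using Im_w Re_w \<open>0 < q\<close> by (intro frac_le) auto
  then have "\<bar>Arg w\<bar> \<le> \<eta> * q / (q / 2)"
    using abs_Arg_le_abs_Im_div_Re[OF \<open>0 < Re w\<close>] by linarith
  then have "\<bar>\<tau> * Arg w\<bar> \<le> \<tau> * (2 * \<eta>)"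
    using \<open>0 < \<tau>\<close> \<open>0 < q\<close> by (simp add: abs_mult mult_left_mono)
  then have "cos (pi/3) \<le> cos \<bar>\<tau> * Arg w\<bar>"
    using \<open>\<eta> * \<tau> \<le> 1/4\<close> pi_gt3 by (intro cos_monotone_0_pi_le) (auto simp: algebra_simps)
  then have "1/2 \<le> cos (\<tau> * Arg w)"
    by (simp add: cos_60)
  then have "(1/2) / cmod w powr \<tau> \<le> cos (\<tau> * Arg w) / cmod w powr \<tau>"
    by (intro divide_right_mono) auto
  then have "1 / (2 * cmod w powr \<tau>) \<le> Re (1 / w powr of_real \<tau>)"
    using Re_inverse_powr_real[OF \<open>w \<noteq> 0\<close>] by simp
  moreover have "1 / (2 * (2 * q) powr \<tau>) \<le> 1 / (2 * cmod w powr \<tau>)"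
    using \<open>cmod w powr \<tau> \<le> (2 * q) powr \<tau>\<close> \<open>w \<noteq> 0\<close> by (simp add: frac_le)
  ultimately show ?thesis
    by linarith
qed

lemma ball_integral_inverse_powr_ge:
  fixes s \<tau> r :: real
  assumes "0 < s" "0 < \<tau>" "0 < r"
  shows "unit_ball_vol DIM('a) / 4 powr \<tau> * integral {0..r} (\<lambda>t. t ^ (DIM('a) - 1) / (s + t\<^sup>2) powr \<tau>)
           \<le> integral (ball (0::'a::euclidean_space) r) (\<lambda>\<zeta>. 1 / (s + norm \<zeta> ^ 2) powr \<tau>)"
proof -
  define \<phi> where "\<phi> t = 1 / (s + t\<^sup>2) powr \<tau>" for t
  have Q_pos: "0 < s + t\<^sup>2" for t
    using \<open>0 < s\<close> by (simp add: add_pos_nonneg)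
  have \<phi>_le: "\<phi> x \<le> c powr \<tau> * \<phi> y" if "s + y\<^sup>2 \<le> c * (s + x\<^sup>2)" for x y c
  proof -
    have "0 < c * (s + x\<^sup>2)"
      using that Q_pos[of y] by linarith
    then have "0 \<le> c"
      using Q_pos[of x] by (simp add: zero_less_mult_iff)
    have "(s + y\<^sup>2) powr \<tau> \<le> c powr \<tau> * (s + x\<^sup>2) powr \<tau>"
      using powr_mono2[OF less_imp_le[OF \<open>0 < \<tau>\<close>] less_imp_le[OF Q_pos] that] \<open>0 \<le> c\<close> Q_pos[of x]
      by (simp add: powr_mult)
    then show ?thesis
      using Q_pos[of x] Q_pos[of y] by (simp add: \<phi>_def field_simps)
  qed
  have "unit_ball_vol DIM('a) / 4 powr \<tau> * integral {0..r} (\<lambda>t. t ^ (DIM('a) - 1) * \<phi> t)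
          \<le> integral (ball (0::'a) r) (\<lambda>\<zeta>. \<phi> (norm \<zeta>))"
  proof (rule radial_integral_le_ball_integral)
    show "continuous_on UNIV \<phi>"
      unfolding \<phi>_def using Q_pos by (intro continuous_intros) (auto simp: less_imp_neq[symmetric])
    show "\<phi> y \<le> \<phi> x" if "0 \<le> x" "x \<le> y" for x y
      using \<phi>_le[where x=y and y=x and c=1] that by (simp add: power_mono)
    show "\<phi> (t/2) \<le> 4 powr \<tau> * \<phi> t" for t
      using \<open>0 < s\<close> by (intro \<phi>_le) (simp add: power_divide)
    show "\<phi> 0 \<le> 4 powr \<tau> * \<phi> (sqrt s)"
      using \<open>0 < s\<close> by (intro \<phi>_le) simp
  qed (use \<open>0 < s\<close> \<open>0 < r\<close> in \<open>auto simp: \<phi>_def\<close>)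
  then show ?thesis
    by (simp add: \<phi>_def)
qed

lemma Re_integral_inverse_powr_ge:
  fixes w :: "'a::euclidean_space \<Rightarrow> complex"
  assumes "0 < \<tau>" "0 < s" "0 < r"
    and w_cont: "continuous_on (cball 0 r) w"
    and near: "\<And>\<zeta>. \<zeta> \<in> cball 0 r \<Longrightarrow>
                  cmod (w \<zeta> - of_real (s + norm \<zeta> ^ 2)) \<le> \<eta> * (s + norm \<zeta> ^ 2)"
    and "\<eta> \<le> 1/2" "\<eta> * \<tau> \<le> 1/4"
  shows "unit_ball_vol DIM('a) / (2 * 8 powr \<tau>)
           * integral {0..r} (\<lambda>t. t ^ (DIM('a) - 1) / (s + t\<^sup>2) powr \<tau>)
         \<le> Re (integral (ball 0 r) (\<lambda>\<zeta>. 1 / w \<zeta> powr of_real \<tau>))"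
proof -
  have Q_pos: "0 < s + t\<^sup>2" for t
    using \<open>0 < s\<close> by (simp add: add_pos_nonneg)
  have "0 < Re (w \<zeta>)" if "\<zeta> \<in> cball 0 r" for \<zeta>
    using Re_pos_if_near_pos_real[OF Q_pos near[OF that]] \<open>\<eta> \<le> 1/2\<close> by simp
  then have "continuous_on (cball 0 r) (\<lambda>\<zeta>. 1 / w \<zeta> powr of_real \<tau>)"
    using w_cont \<open>0 < \<tau>\<close> by (intro continuous_intros) (fastforce intro: less_imp_le)+
  then have "(\<lambda>\<zeta>. 1 / w \<zeta> powr of_real \<tau>) integrable_on ball 0 r"
    by (rule continuous_on_compact_integrable_on[OF compact_cball]) auto
  then have Re_int: "((\<lambda>\<zeta>. Re (1 / w \<zeta> powr of_real \<tau>)) has_integral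
                       Re (integral (ball 0 r) (\<lambda>\<zeta>. 1 / w \<zeta> powr of_real \<tau>))) (ball 0 r)"
    by (intro has_integral_Re integrable_integral)
  have "continuous_on (cball 0 r) (\<lambda>\<zeta>::'a. 1 / (s + norm \<zeta> ^ 2) powr \<tau>)"
    using Q_pos by (intro continuous_intros) (auto simp: less_imp_neq[symmetric])
  then have "(\<lambda>\<zeta>::'a. 1 / (s + norm \<zeta> ^ 2) powr \<tau>) integrable_on ball 0 r"
    by (rule continuous_on_compact_integrable_on[OF compact_cball]) auto
  then have "((\<lambda>\<zeta>::'a. 1 / (s + norm \<zeta> ^ 2) powr \<tau> / (2 * 2 powr \<tau>)) has_integral
          integral (ball (0::'a) r) (\<lambda>\<zeta>. 1 / (s + norm \<zeta> ^ 2) powr \<tau>) / (2 * 2 powr \<tau>)) (ball 0 r)"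
    by (intro has_integral_divide integrable_integral)
  then have pointwise: "integral (ball (0::'a) r) (\<lambda>\<zeta>. 1 / (s + norm \<zeta> ^ 2) powr \<tau>) / (2 * 2 powr \<tau>)
          \<le> Re (integral (ball 0 r) (\<lambda>\<zeta>. 1 / w \<zeta> powr of_real \<tau>))"
  proof (rule has_integral_le[OF _ Re_int])
    fix \<zeta> :: 'a
    assume "\<zeta> \<in> ball 0 r"
    then have "1 / (2 * (2 * (s + norm \<zeta> ^ 2)) powr \<tau>) \<le> Re (1 / w \<zeta> powr of_real \<tau>)"
      using near \<open>0 < \<tau>\<close> Q_pos \<open>\<eta> \<le> 1/2\<close> \<open>\<eta> * \<tau> \<le> 1/4\<close> by (intro Re_inverse_powr_ge) auto
    then show "1 / (s + norm \<zeta> ^ 2) powr \<tau> / (2 * 2 powr \<tau>) \<le> Re (1 / w \<zeta> powr of_real \<tau>)"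
      using Q_pos[of "norm \<zeta>"] powr_mult[of 2 "s + norm \<zeta> ^ 2" \<tau>] by (simp add: mult_ac)
  qed
  have "unit_ball_vol DIM('a) / (2 * 8 powr \<tau>)
          * integral {0..r} (\<lambda>t. t ^ (DIM('a) - 1) / (s + t\<^sup>2) powr \<tau>)
        = unit_ball_vol DIM('a) / 4 powr \<tau> * integral {0..r} (\<lambda>t. t ^ (DIM('a) - 1) / (s + t\<^sup>2) powr \<tau>)
          / (2 * 2 powr \<tau>)"
    using powr_mult[of 2 4 \<tau>] by simp
  also have "\<dots> \<le> integral (ball (0::'a) r) (\<lambda>\<zeta>. 1 / (s + norm \<zeta> ^ 2) powr \<tau>) / (2 * 2 powr \<tau>)"
    using divide_right_mono[OF ball_integral_inverse_powr_ge[where 'a='a, OF \<open>0 < s\<close> \<open>0 < \<tau>\<close> \<open>0 < r\<close>]] by simp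
  finally show ?thesis
    using pointwise by linarith
qed

lemma integral_inverse_powr_near_quadratic:
  fixes W :: "real \<Rightarrow> 'a::euclidean_space \<Rightarrow> complex"
  assumes "0 < \<tau>" "0 < r0" "r0 < \<rho>"
    and cont: "\<And>s. 0 < s \<Longrightarrow> continuous_on (cball 0 r0) (W s)"
    and near: "\<And>s \<zeta>. 0 \<le> s \<Longrightarrow> s < \<rho> \<Longrightarrow> norm \<zeta> < \<rho> \<Longrightarrow>
                 cmod (W s \<zeta> - of_real (s + norm \<zeta> ^ 2)) \<le> \<eta> * (s + norm \<zeta> ^ 2)"
    and "\<eta> \<le> 1/2" "\<eta> * \<tau> \<le> 1/4"
  defines "J \<equiv> \<lambda>s. Re (integral (ball 0 r0) (\<lambda>\<zeta>. 1 / W s \<zeta> powr of_real \<tau>))"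
  shows "\<exists>C'>0. \<exists>s0>0. \<forall>s. 0 < s \<and> s < s0 \<longrightarrow>
           C' * integral {0..r0} (\<lambda>t. t ^ (DIM('a) - 1) / (s + t\<^sup>2) powr \<tau>) \<le> J s"
    and "real DIM('a) \<le> 2 * \<tau> \<Longrightarrow> filterlim J at_top (at_right 0)"
proof -
  define C' where "C' = unit_ball_vol DIM('a) / (2 * 8 powr \<tau>)"
  define I where "I s = integral {0..r0} (\<lambda>t. t ^ (DIM('a) - 1) / (s + t\<^sup>2) powr \<tau>)" for s
  have "0 < C'"
    by (simp add: C'_def)
  have lower: "C' * I s \<le> J s" if "0 < s" "s < \<rho>" for s
    unfolding C'_def I_def J_def
    by (rule Re_integral_inverse_powr_ge[OF \<open>0 < \<tau>\<close> \<open>0 < s\<close> \<open>0 < r0\<close> cont[OF \<open>0 < s\<close>]])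
       (use near that assms(2,3,6,7) in auto)
  with \<open>0 < C'\<close> \<open>0 < r0\<close> \<open>r0 < \<rho>\<close> show "\<exists>C'>0. \<exists>s0>0. \<forall>s. 0 < s \<and> s < s0 \<longrightarrow>
           C' * integral {0..r0} (\<lambda>t. t ^ (DIM('a) - 1) / (s + t\<^sup>2) powr \<tau>) \<le> J s"
    unfolding I_def by (meson order.strict_trans)
  assume "real DIM('a) \<le> 2 * \<tau>"
  then have "filterlim (\<lambda>s. C' * I s) at_top (at_right 0)"
    unfolding I_def using \<open>0 < C'\<close> \<open>0 < r0\<close>
    by (intro filterlim_tendsto_pos_mult_at_top[OF tendsto_const] radial_weight_integral_tendsto_at_top)
       (auto simp: Suc_le_eq)
  moreover have "\<forall>\<^sub>F s in at_right 0. C' * I s \<le> J s"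
    unfolding eventually_at_right_field using lower \<open>0 < r0\<close> \<open>r0 < \<rho>\<close> by (metis order.strict_trans)
  ultimately show "filterlim J at_top (at_right 0)"
    by (rule filterlim_at_top_mono)
qed

section \<open>The bracket near the origin\<close>

lemma smooth_on_imp_continuous_on:
  assumes "smooth_on S g"
  shows "continuous_on S g"
proof -
  have "g differentiable (at x within S)" if "x \<in> S" for x
    using assms that unfolding smooth_on_def by (metis fold_Nil id_apply)
  then show ?thesis
    by (simp add: continuous_on_eq_continuous_within differentiable_imp_continuous_within)
qed

lemma bigo_at_imp_local_bound:
  fixes g k :: "'a::{metric_space,perfect_space} \<Rightarrow> real"
  assumes "g \<in> O[at x](k)" "isCont g x" "isCont k x" "k x = 0"
  obtains c d where "0 < c" "0 < d" "\<And>y. dist y x < d \<Longrightarrow> \<bar>g y\<bar> \<le> c * \<bar>k y\<bar>"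
proof -
  obtain c where "0 < c" and bound: "\<forall>\<^sub>F y in at x. norm (g y) \<le> c * norm (k y)"
    using assms(1) by (elim landau_o.bigE)
  have "((\<lambda>y. c * norm (k y)) \<longlongrightarrow> c * norm (k x)) (at x)"
    using assms(3) by (intro tendsto_intros) (simp add: isCont_def)
  then have "(g \<longlongrightarrow> 0) (at x)"
    using Lim_null_comparison[OF bound] assms(4) by simp
  then have "g x = 0"
    using tendsto_unique[OF at_neq_bot] assms(2) by (auto simp: isCont_def)
  obtain d where "0 < d" and near: "\<And>y. y \<noteq> x \<Longrightarrow> dist y x < d \<Longrightarrow> norm (g y) \<le> c * norm (k y)"
    using bound unfolding eventually_at by auto
  have "\<bar>g y\<bar> \<le> c * \<bar>k y\<bar>" if "dist y x < d" for y
    using near[OF _ that] \<open>g x = 0\<close> \<open>0 < c\<close> by (cases "y = x") auto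
  then show ?thesis
    using that[OF \<open>0 < c\<close> \<open>0 < d\<close>] by blast
qed

lemma continuous_on_imp_local_bound:
  fixes g :: "'a::metric_space \<Rightarrow> 'b::real_normed_vector"
  assumes "continuous_on S g" "x \<in> S"
  obtains d where "0 < d" "\<And>y. y \<in> S \<Longrightarrow> dist y x < d \<Longrightarrow> norm (g y) \<le> norm (g x) + 1"
proof -
  obtain d where "0 < d" and close: "\<And>y. y \<in> S \<Longrightarrow> dist y x < d \<Longrightarrow> dist (g y) (g x) < 1"
    using assms unfolding continuous_on_iff by (meson zero_less_one)
  have "norm (g y) \<le> norm (g x) + 1" if "y \<in> S" "dist y x < d" for y
    using norm_triangle_sub[of "g y" "g x"] close[OF that] unfolding dist_norm by linarith
  then show ?thesis
    using that[OF \<open>0 < d\<close>] by blast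
qed

definition bracket ::
    "(real \<times> 'v \<Rightarrow> real) \<Rightarrow> ('v \<Rightarrow> real) \<Rightarrow> (real \<times> 'v \<Rightarrow> 'v) \<Rightarrow> (real \<times> 'v \<Rightarrow> 'v)
       \<Rightarrow> real \<Rightarrow> 'v::real_inner \<Rightarrow> complex"
  where "bracket f h a b s \<zeta> =
    Complex (f (h \<zeta>, \<zeta>) + s * (1 + inner \<zeta> (b (s, \<zeta>)))) (- (h \<zeta> + s * inner \<zeta> (a (s, \<zeta>))))"

lemma continuous_on_bracket:
  assumes "continuous_on UNIV f" "continuous_on UNIV h"
    and "continuous_on ({0..} \<times> UNIV) a" "continuous_on ({0..} \<times> UNIV) b" "0 \<le> s"
  shows "continuous_on UNIV (bracket f h a b s)"
proof -
  have "continuous_on UNIV (\<lambda>\<zeta>. f (h \<zeta>, \<zeta>))"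
    using assms(2) by (intro continuous_on_compose2[OF assms(1)] continuous_intros) auto
  moreover have "continuous_on UNIV (\<lambda>\<zeta>. a (s, \<zeta>))" "continuous_on UNIV (\<lambda>\<zeta>. b (s, \<zeta>))"
    using \<open>0 \<le> s\<close> by (intro continuous_on_compose2[OF assms(3)] continuous_on_compose2[OF assms(4)]
        continuous_intros; auto)+
  moreover have "bracket f h a b s = (\<lambda>\<zeta>. of_real (f (h \<zeta>, \<zeta>) + s * (1 + inner \<zeta> (b (s, \<zeta>))))
                   + \<i> * of_real (- (h \<zeta> + s * inner \<zeta> (a (s, \<zeta>)))))"
    by (simp add: bracket_def Complex_eq fun_eq_iff)
  ultimately show ?thesis
    using assms(2) by (simp only:) (intro continuous_intros)
qed

lemma bracket_minus_quadratic_le: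
  fixes f :: "real \<times> 'v::real_inner \<Rightarrow> real" and \<zeta> :: 'v
  assumes f: "\<bar>f (h \<zeta>, \<zeta>) - norm \<zeta> ^ 2\<bar> \<le> cf * (\<bar>h \<zeta>\<bar> * norm \<zeta> + norm \<zeta> ^ 3)"
    and h: "\<bar>h \<zeta>\<bar> \<le> ch * norm \<zeta> ^ 3"
    and a: "norm (a (s, \<zeta>)) \<le> A" and b: "norm (b (s, \<zeta>)) \<le> B"
    and "0 \<le> cf" "0 \<le> ch" "0 \<le> s" "norm \<zeta> \<le> 1"
  shows "cmod (bracket f h a b s \<zeta> - of_real (s + norm \<zeta> ^ 2))
           \<le> (cf * (ch + 1) + ch + A + B) * norm \<zeta> * (s + norm \<zeta> ^ 2)"
proof -
  define r where "r = norm \<zeta>"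
  have "0 \<le> r" "r \<le> 1"
    using \<open>norm \<zeta> \<le> 1\<close> by (auto simp: r_def)
  have "0 \<le> A" "0 \<le> B"
    using a b norm_ge_zero order_trans by blast+
  have "\<bar>h \<zeta>\<bar> * r \<le> ch * r ^ 3"
    using mult_mono[OF h \<open>r \<le> 1\<close>] \<open>0 \<le> ch\<close> \<open>0 \<le> r\<close> by (simp add: r_def)
  then have f_le: "\<bar>f (h \<zeta>, \<zeta>) - r ^ 2\<bar> \<le> cf * (ch + 1) * r ^ 3"
    using f mult_left_mono[of _ _ cf] \<open>0 \<le> cf\<close> by (fastforce simp: r_def algebra_simps)
  have inner_le: "\<bar>s * inner \<zeta> v\<bar> \<le> V * s * r" if "norm v \<le> V" for v V
  proof -
    have "\<bar>inner \<zeta> v\<bar> \<le> r * V"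
      using order_trans[OF Cauchy_Schwarz_ineq2 mult_left_mono[OF that norm_ge_zero]] by (simp add: r_def)
    from mult_left_mono[OF this \<open>0 \<le> s\<close>] show ?thesis
      using \<open>0 \<le> s\<close> by (simp add: abs_mult mult_ac)
  qed
  have "Re (bracket f h a b s \<zeta> - of_real (s + r ^ 2)) = (f (h \<zeta>, \<zeta>) - r ^ 2) + s * inner \<zeta> (b (s, \<zeta>))"
    by (simp add: bracket_def algebra_simps)
  then have Re: "\<bar>Re (bracket f h a b s \<zeta> - of_real (s + r ^ 2))\<bar> \<le> cf * (ch + 1) * r ^ 3 + B * s * r"
    using f_le inner_le[OF b] abs_triangle_ineq[of "f (h \<zeta>, \<zeta>) - r ^ 2" "s * inner \<zeta> (b (s, \<zeta>))"]
    by linarith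
  have "Im (bracket f h a b s \<zeta> - of_real (s + r ^ 2)) = - (h \<zeta> + s * inner \<zeta> (a (s, \<zeta>)))"
    by (simp add: bracket_def)
  then have Im: "\<bar>Im (bracket f h a b s \<zeta> - of_real (s + r ^ 2))\<bar> \<le> ch * r ^ 3 + A * s * r"
    using h inner_le[OF a] abs_triangle_ineq[of "h \<zeta>" "s * inner \<zeta> (a (s, \<zeta>))"]
    by (simp add: r_def)
  define C where "C = cf * (ch + 1) + ch + A + B"
  have C_ge: "cf * (ch + 1) + ch \<le> C" "A + B \<le> C"
    using \<open>0 \<le> A\<close> \<open>0 \<le> B\<close> \<open>0 \<le> cf\<close> \<open>0 \<le> ch\<close> by (simp_all add: C_def)
  have "cmod (bracket f h a b s \<zeta> - of_real (s + r ^ 2))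
          \<le> (cf * (ch + 1) + ch) * r ^ 3 + (A + B) * (s * r)"
    using cmod_le[of "bracket f h a b s \<zeta> - of_real (s + r ^ 2)"] Re Im by (simp add: algebra_simps)
  also have "\<dots> \<le> C * r ^ 3 + C * (s * r)"
    using C_ge \<open>0 \<le> r\<close> \<open>0 \<le> s\<close> by (intro add_mono mult_right_mono) auto
  also have "\<dots> = C * r * (s + r ^ 2)"
    by (simp add: algebra_simps power3_eq_cube power2_eq_square)
  finally show ?thesis
    by (simp add: r_def C_def)
qed

lemma bracket_near_quadratic_of_bounds:
  fixes f :: "real \<times> 'v::real_inner \<Rightarrow> real" and h :: "'v \<Rightarrow> real"
    and a b :: "real \<times> 'v \<Rightarrow> 'v"
  assumes f_bound: "\<And>x z. \<bar>x\<bar> + norm z < df \<Longrightarrow>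
                      \<bar>f (x, z) - norm z ^ 2\<bar> \<le> cf * (\<bar>x\<bar> * norm z + norm z ^ 3)"
    and h_bound: "\<And>\<zeta>. norm \<zeta> < dh \<Longrightarrow> \<bar>h \<zeta>\<bar> \<le> ch * norm \<zeta> ^ 3"
    and a_bound: "\<And>s \<zeta>. 0 \<le> s \<Longrightarrow> s + norm \<zeta> < dab \<Longrightarrow> norm (a (s, \<zeta>)) \<le> A"
    and b_bound: "\<And>s \<zeta>. 0 \<le> s \<Longrightarrow> s + norm \<zeta> < dab \<Longrightarrow> norm (b (s, \<zeta>)) \<le> B"
    and "0 < cf" "0 < ch" "0 < df" "0 < dh" "0 < dab" "0 < \<eta>"
  obtains \<rho> where "0 < \<rho>"
    "\<And>s \<zeta>. 0 \<le> s \<Longrightarrow> s < \<rho> \<Longrightarrow> norm \<zeta> < \<rho> \<Longrightarrow>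
       cmod (bracket f h a b s \<zeta> - of_real (s + norm \<zeta> ^ 2)) \<le> \<eta> * (s + norm \<zeta> ^ 2)"
proof -
  define C where "C = cf * (ch + 1) + ch + A + B"
  have "norm (a (0, 0)) \<le> A" "norm (b (0, 0)) \<le> B"
    using a_bound[of 0 0] b_bound[of 0 0] \<open>0 < dab\<close> by auto
  then have "0 \<le> A" "0 \<le> B"
    by (meson norm_ge_zero order_trans)+
  then have "0 < C"
    using \<open>0 < cf\<close> \<open>0 < ch\<close> by (simp add: C_def add_pos_nonneg)
  define \<rho> where "\<rho> = min (min 1 dh) (min (dab / 2) (min (df / (ch + 1)) (\<eta> / C)))"
  have "0 < \<rho>"
    using \<open>0 < ch\<close> \<open>0 < C\<close> assms(7-) by (simp add: \<rho>_def)
  have \<rho>_le: "\<rho> \<le> 1" "\<rho> \<le> dh" "\<rho> \<le> dab / 2" "\<rho> \<le> df / (ch + 1)" "\<rho> \<le> \<eta> / C"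
    unfolding \<rho>_def by (meson min.cobounded1 min.cobounded2 order_trans)+
  show ?thesis
  proof (rule that[OF \<open>0 < \<rho>\<close>])
    fix s :: real and \<zeta> :: 'v
    assume s: "0 \<le> s" "s < \<rho>" and \<zeta>: "norm \<zeta> < \<rho>"
    have "norm \<zeta> ^ 3 \<le> norm \<zeta>"
      using power_decreasing[of 1 3 "norm \<zeta>"] \<zeta> \<rho>_le(1) by simp
    have h: "\<bar>h \<zeta>\<bar> \<le> ch * norm \<zeta> ^ 3"
      using h_bound \<zeta> \<rho>_le(2) by simp
    \<comment> \<open>\<open>\<rho> \<le> df / (ch + 1)\<close> keeps \<open>(h \<zeta>, \<zeta>)\<close> inside the neighbourhood where the bound on \<open>f\<close> holds\<close>
    have "\<bar>h \<zeta>\<bar> + norm \<zeta> \<le> (ch + 1) * norm \<zeta>"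
      using h mult_left_mono[OF \<open>norm \<zeta> ^ 3 \<le> norm \<zeta>\<close> less_imp_le[OF \<open>0 < ch\<close>]]
      by (simp add: algebra_simps)
    also have "\<dots> < (ch + 1) * \<rho>"
      using \<zeta> \<open>0 < ch\<close> by (intro mult_strict_left_mono) auto
    also have "\<dots> \<le> df"
      using mult_left_mono[OF \<rho>_le(4), of "ch + 1"] \<open>0 < ch\<close> by simp
    finally have f: "\<bar>f (h \<zeta>, \<zeta>) - norm \<zeta> ^ 2\<bar> \<le> cf * (\<bar>h \<zeta>\<bar> * norm \<zeta> + norm \<zeta> ^ 3)"
      by (rule f_bound)
    have ab: "0 \<le> s" "s + norm \<zeta> < dab"
      using s \<zeta> \<rho>_le(3) by auto
    have "cmod (bracket f h a b s \<zeta> - of_real (s + norm \<zeta> ^ 2)) \<le> C * norm \<zeta> * (s + norm \<zeta> ^ 2)"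
      unfolding C_def
      by (rule bracket_minus_quadratic_le[where f=f and h=h and a=a and b=b,
            OF f h a_bound[OF ab] b_bound[OF ab]])
         (use \<open>0 < cf\<close> \<open>0 < ch\<close> s \<zeta> \<rho>_le(1) in simp_all)
    also have "\<dots> \<le> \<eta> * (s + norm \<zeta> ^ 2)"
    proof (rule mult_right_mono)
      have "C * \<rho> \<le> \<eta>"
        using mult_left_mono[OF \<rho>_le(5), of C] \<open>0 < C\<close> by simp
      then show "C * norm \<zeta> \<le> \<eta>"
        using mult_strict_left_mono[OF \<zeta> \<open>0 < C\<close>] by linarith
    qed (use s in simp)
    finally show "cmod (bracket f h a b s \<zeta> - of_real (s + norm \<zeta> ^ 2)) \<le> \<eta> * (s + norm \<zeta> ^ 2)" .
  qed
qed

lemma bracket_near_quadratic: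
  fixes f :: "real \<times> 'v::euclidean_space \<Rightarrow> real" and h :: "'v \<Rightarrow> real"
    and a b :: "real \<times> 'v \<Rightarrow> 'v"
  assumes f_cont: "continuous_on UNIV f"
    and f_asym: "(\<lambda>(x, z). f (x, z) - norm z ^ 2)
                   \<in> O[at (0, 0)](\<lambda>(x, z). \<bar>x\<bar> * norm z + norm z ^ 3)"
    and h_cont: "continuous_on UNIV h" and h_asym: "h \<in> O[at 0](\<lambda>\<zeta>. norm \<zeta> ^ 3)"
    and a_cont: "continuous_on ({0..} \<times> UNIV) a" and b_cont: "continuous_on ({0..} \<times> UNIV) b"
    and "0 < \<eta>"
  obtains \<rho> where "0 < \<rho>"
    "\<And>s \<zeta>. 0 \<le> s \<Longrightarrow> s < \<rho> \<Longrightarrow> norm \<zeta> < \<rho> \<Longrightarrow>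
       cmod (bracket f h a b s \<zeta> - of_real (s + norm \<zeta> ^ 2)) \<le> \<eta> * (s + norm \<zeta> ^ 2)"
proof -
  have f_isCont: "isCont (\<lambda>(x, z). f (x, z) - norm z ^ 2) (0, 0)"
    using f_cont unfolding case_prod_unfold
    by (auto intro!: continuous_intros simp: continuous_on_eq_continuous_at)
  have k_isCont: "isCont (\<lambda>(x::real, z::'v). \<bar>x\<bar> * norm z + norm z ^ 3) (0, 0)"
    unfolding case_prod_unfold by (intro continuous_intros)
  obtain cf df where "0 < cf" "0 < df" and f_near: "\<And>p. dist p (0, 0) < df \<Longrightarrow>
      \<bar>(\<lambda>(x, z). f (x, z) - norm z ^ 2) p\<bar> \<le> cf * \<bar>(\<lambda>(x, z). \<bar>x\<bar> * norm z + norm z ^ 3) p\<bar>"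
    by (rule bigo_at_imp_local_bound[OF f_asym f_isCont k_isCont]) simp_all
  have "isCont h 0"
    using h_cont by (simp add: continuous_on_eq_continuous_at)
  then obtain ch dh where "0 < ch" "0 < dh" and h_near:
      "\<And>\<zeta>. dist \<zeta> 0 < dh \<Longrightarrow> \<bar>h \<zeta>\<bar> \<le> ch * \<bar>norm \<zeta> ^ 3\<bar>"
    by (rule bigo_at_imp_local_bound[OF h_asym]) (simp_all add: continuous_intros)
  obtain da where "0 < da" and a_near:
      "\<And>p. p \<in> {0..} \<times> UNIV \<Longrightarrow> dist p (0, 0) < da \<Longrightarrow> norm (a p) \<le> norm (a (0, 0)) + 1"
    by (rule continuous_on_imp_local_bound[OF a_cont, where x="(0, 0)"]) auto
  obtain db where "0 < db" and b_near:
      "\<And>p. p \<in> {0..} \<times> UNIV \<Longrightarrow> dist p (0, 0) < db \<Longrightarrow> norm (b p) \<le> norm (b (0, 0)) + 1"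
    by (rule continuous_on_imp_local_bound[OF b_cont, where x="(0, 0)"]) auto
  have dist_Pair: "dist (x, z) (0, 0) \<le> \<bar>x\<bar> + norm z" for x :: real and z :: 'v
    using norm_Pair_le[of x z] by (simp add: dist_norm)
  show ?thesis
  proof (rule bracket_near_quadratic_of_bounds[where cf=cf and df=df and ch=ch and dh=dh
        and dab="min da db" and A="norm (a (0, 0)) + 1" and B="norm (b (0, 0)) + 1" and \<eta>=\<eta>])
    show "\<bar>f (x, z) - norm z ^ 2\<bar> \<le> cf * (\<bar>x\<bar> * norm z + norm z ^ 3)" if "\<bar>x\<bar> + norm z < df" for x z
      using f_near[of "(x, z)"] dist_Pair[of x z] that by simp
    show "\<bar>h \<zeta>\<bar> \<le> ch * norm \<zeta> ^ 3" if "norm \<zeta> < dh" for \<zeta>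
      using h_near[of \<zeta>] that by simp
    show "norm (a (s, \<zeta>)) \<le> norm (a (0, 0)) + 1" "norm (b (s, \<zeta>)) \<le> norm (b (0, 0)) + 1"
      if "0 \<le> s" "s + norm \<zeta> < min da db" for s \<zeta>
      using a_near[of "(s, \<zeta>)"] b_near[of "(s, \<zeta>)"] dist_Pair[of s \<zeta>] that by auto
  qed (use that \<open>0 < cf\<close> \<open>0 < df\<close> \<open>0 < ch\<close> \<open>0 < dh\<close> \<open>0 < da\<close> \<open>0 < db\<close> \<open>0 < \<eta>\<close> in auto)
qed

theorem mainTheorem6:
  fixes f :: "real \<times> (complex ^ 'n) \<Rightarrow> real"
    and h :: "complex ^ 'n \<Rightarrow> real"
    and a b :: "real \<times> (complex ^ 'n) \<Rightarrow> complex ^ 'n"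
    and \<tau> :: real
  assumes f_smooth: "smooth_on UNIV f"
    and f_asym: "(\<lambda>(x, z). f (x, z) - norm z ^ 2)
                   \<in> O[at (0, 0)](\<lambda>(x, z). \<bar>x\<bar> * norm z + norm z ^ 3)"
    and h_smooth: "smooth_on UNIV h"
    and h_asym: "h \<in> O[at 0](\<lambda>\<zeta>. norm \<zeta> ^ 3)"
    and a_smooth: "smooth_on ({0..} \<times> UNIV) a"
    and b_smooth: "smooth_on ({0..} \<times> UNIV) b"
    and tau_pos: "\<tau> > 0"
  defines "W \<equiv> (\<lambda>s \<zeta>. Complex (f (h \<zeta>, \<zeta>) + s * (1 + inner \<zeta> (b (s, \<zeta>))))
                                (- (h \<zeta> + s * inner \<zeta> (a (s, \<zeta>)))))"
  shows "\<exists>\<rho>>0. \<forall>r0. 0 < r0 \<and> r0 < \<rho> \<longrightarrow>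
     (let J = (\<lambda>s. integral (ball 0 r0) (\<lambda>\<zeta>. 1 / (W s \<zeta> powr complex_of_real \<tau>))) in
       (\<exists>s1>0. \<forall>s \<zeta>. 0 \<le> s \<and> s < s1 \<and> norm \<zeta> < r0 \<and> (s, \<zeta>) \<noteq> (0, 0)
                 \<longrightarrow> Re (W s \<zeta>) > 0)
     \<and> (\<exists>C'>0. \<exists>s0>0. \<forall>s. 0 < s \<and> s < s0 \<longrightarrow>
            Re (J s) \<ge> C' * integral {0..r0} (\<lambda>r. r ^ (2 * CARD('n) - 1) / (s + r\<^sup>2) powr \<tau>))
     \<and> (\<tau> \<ge> real CARD('n) \<longrightarrow> filterlim (\<lambda>s. Re (J s)) at_top (at_right 0)))"
proof -
  have cont: "continuous_on UNIV f" "continuous_on UNIV h"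
      "continuous_on ({0..} \<times> UNIV) a" "continuous_on ({0..} \<times> UNIV) b"
    using f_smooth h_smooth a_smooth b_smooth by (simp_all add: smooth_on_imp_continuous_on)
  have W_eq: "W = bracket f h a b"
    by (simp add: W_def bracket_def fun_eq_iff)
  define \<eta> where "\<eta> = min (1/2) (1 / (4 * \<tau>))"
  have \<eta>: "0 < \<eta>" "\<eta> \<le> 1/2" "\<eta> * \<tau> \<le> 1/4"
    using tau_pos by (auto simp: \<eta>_def min_def field_simps)
  obtain \<rho> where "0 < \<rho>" and near: "\<And>s \<zeta>. 0 \<le> s \<Longrightarrow> s < \<rho> \<Longrightarrow> norm \<zeta> < \<rho> \<Longrightarrow>
      cmod (W s \<zeta> - of_real (s + norm \<zeta> ^ 2)) \<le> \<eta> * (s + norm \<zeta> ^ 2)"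
    unfolding W_eq by (rule bracket_near_quadratic[OF cont(1) f_asym cont(2) h_asym cont(3,4) \<eta>(1)]) blast
  have W_cont: "continuous_on (cball 0 r0) (W s)" if "0 < s" for s r0
    using continuous_on_bracket[OF cont, of s] that continuous_on_subset[of UNIV] by (simp add: W_eq)
  have positive: "\<exists>s1>0. \<forall>s \<zeta>. 0 \<le> s \<and> s < s1 \<and> norm \<zeta> < r0 \<and> (s, \<zeta>) \<noteq> (0, 0) \<longrightarrow> Re (W s \<zeta>) > 0"
    if "r0 < \<rho>" for r0
  proof (intro exI[of _ \<rho>] conjI allI impI \<open>0 < \<rho>\<close>)
    fix s :: real and \<zeta> :: "complex ^ 'n"
    assume s\<zeta>: "0 \<le> s \<and> s < \<rho> \<and> norm \<zeta> < r0 \<and> (s, \<zeta>) \<noteq> (0, 0)"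
    then have "0 < s + norm \<zeta> ^ 2"
      by (cases "s = 0") (auto simp: add_pos_nonneg)
    then show "0 < Re (W s \<zeta>)"
      using Re_pos_if_near_pos_real near[of s \<zeta>] s\<zeta> that \<eta> by fastforce
  qed
  have bounds:
    "\<exists>C'>0. \<exists>s0>0. \<forall>s. 0 < s \<and> s < s0 \<longrightarrow> C' * integral {0..r0} (\<lambda>r. r ^ (2 * CARD('n) - 1) / (s + r\<^sup>2) powr \<tau>)
        \<le> Re (integral (ball 0 r0) (\<lambda>\<zeta>. 1 / (W s \<zeta> powr complex_of_real \<tau>)))"
    "real CARD('n) \<le> \<tau> \<Longrightarrow>
       filterlim (\<lambda>s. Re (integral (ball 0 r0) (\<lambda>\<zeta>. 1 / (W s \<zeta> powr complex_of_real \<tau>)))) at_top (at_right 0)"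
    if "0 < r0" "r0 < \<rho>" for r0
    using integral_inverse_powr_near_quadratic[where W=W, OF tau_pos that W_cont near \<eta>(2,3)]
    by (simp_all add: mult.commute)
  show ?thesis
    unfolding Let_def using \<open>0 < \<rho>\<close> positive bounds by blast
qed

end
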